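(* Let $(f_n)_{n\ge0}$ be non-negative functions on $[0,T]$ with $M_0=\sup_{t\in[0,T]}f_0(t)<\infty$ and $M_1=\sup_{t\in[0,T]}f_1(t)<\infty$, and let $M=M_0+M_1$. Assume that for every $n\ge2$ and $t\in[0,T]$, $$f_n(t)\le\int_0^t\big(f_{n-1}(s)+f_{n-2}(s)\big)g(t-s)\,ds,$$ where $g:[0,T]\to\mathbb{R}_+$ is integrable. Then there exists a sequence $(a_n)$ of positive numbers with $\sum_{n\ge0}a_n^{1/p}<\infty$ for every $p>0$ and $\sup_{t\in[0,T]}f_n(t)\le Ma_n$ for all $n\ge0$. In particular $\sum_{n\ge0}\sup_{t\in[0,T]}f_n(t)^{1/p}<\infty$ for every $p>0$. *)

theory Defs
  imports "HOL-Analysis.Analysis"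
begin

end

theory Submission
  imports Defs
begin

text \<open>Weighting by \<open>exp (- l * u)\<close> with \<open>l\<close> large makes the kernel \<open>g\<close> as small as we like in
  \<open>L\<^sup>1\<close>, while the factor \<open>exp (l * t)\<close> it costs is bounded on \<open>[0,T]\<close>. In the weighted norm
  \<open>sup\<^sub>t exp (- l * t) * f\<^sub>n t\<close> the recursion then reads \<open>x\<^sub>n \<le> \<epsilon> (x\<^sub>n\<^sub>-\<^sub>1 + x\<^sub>n\<^sub>-\<^sub>2)\<close>
  with \<open>\<epsilon> \<le> 1/8\<close>, which forces \<open>x\<^sub>n \<le> 2 M 2\<^sup>-\<^sup>n\<close>; geometric sequences stay summable under
  every power \<open>1/p\<close>.\<close>

lemma has_integral_reverse_Icc:
  fixes \<phi> :: "real \<Rightarrow> real"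
  assumes "(\<phi> has_integral I) {0..t}"
  shows "((\<lambda>s. \<phi> (t - s)) has_integral I) {0..t}"
proof -
  have "((\<lambda>x. \<phi> (-x)) has_integral I) {-t..-0}"
    using assms has_integral_reflect_real[of \<phi> I 0 t] by blast
  then have "(((\<lambda>x. \<phi> (-x)) \<circ> ((+) (-t))) has_integral I) {0..t}"
    using has_integral_shift_Icc_real[of "\<lambda>x. \<phi> (-x)" "-t" I 0 t] by simp
  then show ?thesis by (simp add: o_def)
qed

lemma integrable_continuous_mult_nonneg:
  fixes h g :: "real \<Rightarrow> real"
  assumes h: "continuous_on {a..b} h"
    and g_nonneg: "\<And>u. u \<in> {a..b} \<Longrightarrow> 0 \<le> g u"
    and g_int: "g integrable_on {a..b}"
  shows "(\<lambda>u. h u * g u) integrable_on {a..b}"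
proof -
  have "(\<lambda>u. h u * g u) absolutely_integrable_on {a..b}"
  proof (rule absolutely_integrable_bounded_measurable_product_real)
    show "h \<in> borel_measurable (lebesgue_on {a..b})"
      by (rule continuous_imp_measurable_on_sets_lebesgue[OF h]) simp
    show "bounded (h ` {a..b})"
      using h compact_continuous_image compact_imp_bounded by blast
    show "g absolutely_integrable_on {a..b}"
      using nonnegative_absolutely_integrable_1 g_int g_nonneg by blast
  qed simp
  then show ?thesis using set_lebesgue_integral_eq_integral(1) by blast
qed

lemma integrable_exp_weight:
  fixes g :: "real \<Rightarrow> real"
  assumes "\<And>u. u \<in> {a..b} \<Longrightarrow> 0 \<le> g u" and "g integrable_on {a..b}"
  shows "(\<lambda>u. exp (- l * u) * g u) integrable_on {a..b}"
  by (rule integrable_continuous_mult_nonneg[OF _ assms]) (intro continuous_intros)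

text \<open>Dominated convergence: the weights \<open>exp (- k * u)\<close> tend to the indicator of the null set
  \<open>{0}\<close>.\<close>

lemma exp_weighted_integral_small:
  fixes g :: "real \<Rightarrow> real"
  assumes g_nonneg: "\<And>u. u \<in> {0..T} \<Longrightarrow> 0 \<le> g u"
    and g_int: "g integrable_on {0..T}"
    and "0 < \<epsilon>"
  shows "\<exists>l\<ge>0. integral {0..T} (\<lambda>u. exp (- l * u) * g u) < \<epsilon>"
proof -
  define F where "F k u = exp (- real k * u) * g u" for k u
  define L where "L u = (if u = 0 then g 0 else 0)" for u :: real
  have "(\<lambda>k. integral {0..T} (F k)) \<longlonglongrightarrow> integral {0..T} L"
  proof (rule dominated_convergence(2))
    show "F k integrable_on {0..T}" for k
      unfolding F_def by (rule integrable_exp_weight[OF g_nonneg g_int])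
    show "norm (F k u) \<le> g u" if "u \<in> {0..T}" for k u
    proof -
      have "exp (- real k * u) \<le> 1" using that by auto
      then show ?thesis using g_nonneg[OF that] unfolding F_def
        by (simp add: abs_mult mult_left_le_one_le)
    qed
    show "(\<lambda>k. F k u) \<longlonglongrightarrow> L u" if "u \<in> {0..T}" for u
    proof (cases "u = 0")
      case False
      then have "0 < u" using that by auto
      have "exp (- real k * u) = exp (-u) ^ k" for k
        by (metis exp_of_nat_mult mult_minus_left mult_minus_right)
      moreover have "(\<lambda>k. exp (-u) ^ k) \<longlonglongrightarrow> 0"
        by (rule LIMSEQ_power_zero) (use \<open>0 < u\<close> in simp)
      ultimately have "(\<lambda>k. exp (- real k * u) * g u) \<longlonglongrightarrow> 0 * g u"
        by (simp add: tendsto_mult_left_zero)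
      then show ?thesis using False by (simp add: F_def L_def)
    qed (simp add: F_def L_def)
  qed (rule g_int)
  moreover have "integral {0..T} L = 0"
    by (rule integral_unique, rule has_integral_spike[where S="{0}" and f="\<lambda>_. 0"])
       (auto simp: L_def)
  ultimately have "eventually (\<lambda>k. integral {0..T} (F k) < \<epsilon>) sequentially"
    using \<open>0 < \<epsilon>\<close> by (intro order_tendstoD) auto
  then obtain k where "integral {0..T} (F k) < \<epsilon>"
    using eventually_sequentially by auto
  then show ?thesis unfolding F_def by (intro exI[of _ "real k"]) auto
qed

lemma convolution_le_exp_weighted:
  fixes F g :: "real \<Rightarrow> real"
  assumes t: "t \<in> {0..T}" and "0 \<le> C"
    and F_le: "\<And>s. s \<in> {0..t} \<Longrightarrow> F s \<le> C * exp (l * s)"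
    and g_nonneg: "\<And>u. u \<in> {0..T} \<Longrightarrow> 0 \<le> g u"
    and g_int: "g integrable_on {0..T}"
  shows "integral {0..t} (\<lambda>s. F s * g (t - s))
           \<le> C * exp (l * t) * integral {0..T} (\<lambda>u. exp (- l * u) * g u)"
proof -
  define \<phi> where "\<phi> u = exp (- l * u) * g u" for u
  have \<phi>_eta: "(\<lambda>u. exp (- l * u) * g u) = \<phi>"
    by (simp add: \<phi>_def fun_eq_iff)
  have \<phi>_int: "\<phi> integrable_on {0..T}"
    unfolding \<phi>_def by (rule integrable_exp_weight[OF g_nonneg g_int])
  have \<phi>_nonneg: "0 \<le> \<phi> u" if "u \<in> {0..T}" for u
    unfolding \<phi>_def using g_nonneg[OF that] by simp
  have sub: "{0..t} \<subseteq> {0..T}" using t by auto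
  have \<phi>_int_t: "\<phi> integrable_on {0..t}"
    using integrable_subinterval_real[OF \<phi>_int sub] by simp
  have reverse: "((\<lambda>s. \<phi> (t - s)) has_integral integral {0..t} \<phi>) {0..t}"
    by (rule has_integral_reverse_Icc) (rule integrable_integral[OF \<phi>_int_t])
  have "integral {0..t} \<phi> \<le> integral {0..T} \<phi>"
    by (rule integral_subset_le[OF sub \<phi>_int_t \<phi>_int]) (use \<phi>_nonneg in auto)
  then have bound: "C * exp (l * t) * integral {0..t} \<phi> \<le> C * exp (l * t) * integral {0..T} \<phi>"
    using \<open>0 \<le> C\<close> by (intro mult_left_mono) auto
  have "integral {0..t} (\<lambda>s. F s * g (t - s)) \<le> C * exp (l * t) * integral {0..T} \<phi>"
  proof (cases "(\<lambda>s. F s * g (t - s)) integrable_on {0..t}")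
    case True
    have "integral {0..t} (\<lambda>s. F s * g (t - s)) \<le> integral {0..t} (\<lambda>s. C * exp (l * t) * \<phi> (t - s))"
    proof (rule integral_le[OF True])
      show "(\<lambda>s. C * exp (l * t) * \<phi> (t - s)) integrable_on {0..t}"
        using reverse by (intro integrable_on_mult_right) (rule has_integral_integrable)
      fix s assume s: "s \<in> {0..t}"
      then have "t - s \<in> {0..T}" using t by auto
      then have "F s * g (t - s) \<le> C * exp (l * s) * g (t - s)"
        using F_le[OF s] g_nonneg by (intro mult_right_mono) auto
      also have "exp (l * s) = exp (l * t) * exp (- l * (t - s))"
        by (simp add: exp_add[symmetric] algebra_simps)
      finally show "F s * g (t - s) \<le> C * exp (l * t) * \<phi> (t - s)"
        by (simp add: \<phi>_def mult.assoc)
    qed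
    also have "\<dots> = C * exp (l * t) * integral {0..t} \<phi>"
      using integral_unique[OF reverse] by simp
    finally show ?thesis using bound by linarith
  next
    case False
    have "0 \<le> integral {0..T} \<phi>"
      by (rule integral_nonneg[OF \<phi>_int]) (use \<phi>_nonneg in auto)
    then show ?thesis
      using False \<open>0 \<le> C\<close> by (simp add: not_integrable_integral)
  qed
  then show ?thesis by (simp only: \<phi>_eta)
qed

lemma two_step_convolution_weighted_decay:
  fixes f :: "nat \<Rightarrow> real \<Rightarrow> real" and g :: "real \<Rightarrow> real"
  assumes "0 \<le> M"
    and f0: "\<And>t. t \<in> {0..T} \<Longrightarrow> f 0 t \<le> M"
    and f1: "\<And>t. t \<in> {0..T} \<Longrightarrow> f 1 t \<le> M"
    and g_nonneg: "\<And>u. u \<in> {0..T} \<Longrightarrow> 0 \<le> g u"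
    and g_int: "g integrable_on {0..T}"
    and rec: "\<And>n t. n \<ge> 2 \<Longrightarrow> t \<in> {0..T} \<Longrightarrow>
              f n t \<le> integral {0..t} (\<lambda>s. (f (n - 1) s + f (n - 2) s) * g (t - s))"
    and "0 \<le> l" and small: "integral {0..T} (\<lambda>u. exp (- l * u) * g u) \<le> 1/8"
  shows "t \<in> {0..T} \<Longrightarrow> f n t \<le> 2 * M * (1/2)^n * exp (l * t)"
proof (induction n arbitrary: t rule: less_induct)
  case (less n)
  have "1 \<le> exp (l * t)"
    using \<open>0 \<le> l\<close> less.prems by simp
  then have "M \<le> M * exp (l * t)"
    using mult_left_mono[OF _ \<open>0 \<le> M\<close>] by fastforce
  then have base: "M \<le> 2 * M * (1/2)^n * exp (l * t)" if "n \<le> 1"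
    using that \<open>0 \<le> M\<close> by (cases n) auto
  consider "n = 0" | "n = 1" | "n \<ge> 2" by linarith
  then show ?case
  proof cases
    case 1
    then show ?thesis using f0[OF less.prems] base by simp
  next
    case 2
    then show ?thesis using f1[OF less.prems] base by simp
  next
    case 3
    then obtain m where n: "n = m + 2" by (metis add.commute le_add_diff_inverse)
    \<comment> \<open>\<open>2M 2\<^sup>1\<^sup>-\<^sup>n + 2M 2\<^sup>2\<^sup>-\<^sup>n = 12M 2\<^sup>-\<^sup>n\<close>, and \<open>12/8 \<le> 2\<close> closes the induction.\<close>
    define C where "C = 12 * M * (1/2)^n"
    have "0 \<le> C" unfolding C_def using \<open>0 \<le> M\<close> by simp
    have "f (n - 1) s + f (n - 2) s \<le> C * exp (l * s)" if "s \<in> {0..t}" for s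
    proof -
      have "s \<in> {0..T}" using that less.prems by auto
      then have "f (n - 1) s + f (n - 2) s
                  \<le> 2 * M * (1/2)^(n - 1) * exp (l * s) + 2 * M * (1/2)^(n - 2) * exp (l * s)"
        using less.IH[of "n - 1"] less.IH[of "n - 2"] 3 by (intro add_mono) auto
      also have "\<dots> = C * exp (l * s)"
        unfolding C_def n by (simp add: algebra_simps)
      finally show ?thesis .
    qed
    then have "integral {0..t} (\<lambda>s. (f (n - 1) s + f (n - 2) s) * g (t - s))
                 \<le> C * exp (l * t) * integral {0..T} (\<lambda>u. exp (- l * u) * g u)"
      by (rule convolution_le_exp_weighted[OF less.prems \<open>0 \<le> C\<close> _ g_nonneg g_int])
    with rec[OF 3 less.prems]
    have "f n t \<le> C * exp (l * t) * integral {0..T} (\<lambda>u. exp (- l * u) * g u)"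
      by linarith
    also have "\<dots> \<le> C * exp (l * t) * (1/8)"
      using \<open>0 \<le> C\<close> small by (intro mult_left_mono) auto
    also have "\<dots> \<le> 2 * M * (1/2)^n * exp (l * t)"
      unfolding C_def using \<open>0 \<le> M\<close> by simp
    finally show ?thesis .
  qed
qed

lemma two_step_convolution_geometric_decay:
  fixes f :: "nat \<Rightarrow> real \<Rightarrow> real" and g :: "real \<Rightarrow> real"
  assumes "0 \<le> M"
    and f0: "\<And>t. t \<in> {0..T} \<Longrightarrow> f 0 t \<le> M"
    and f1: "\<And>t. t \<in> {0..T} \<Longrightarrow> f 1 t \<le> M"
    and g_nonneg: "\<And>u. u \<in> {0..T} \<Longrightarrow> 0 \<le> g u"
    and g_int: "g integrable_on {0..T}"
    and rec: "\<And>n t. n \<ge> 2 \<Longrightarrow> t \<in> {0..T} \<Longrightarrow>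
              f n t \<le> integral {0..t} (\<lambda>s. (f (n - 1) s + f (n - 2) s) * g (t - s))"
  obtains c :: real where "0 < c" and "\<And>n t. t \<in> {0..T} \<Longrightarrow> f n t \<le> M * c * (1/2)^n"
proof -
  obtain l where "0 \<le> l" and small: "integral {0..T} (\<lambda>u. exp (- l * u) * g u) \<le> 1/8"
    using exp_weighted_integral_small[OF g_nonneg g_int, of "1/8"] by (auto dest: less_imp_le)
  have "f n t \<le> M * (2 * exp (l * T)) * (1/2)^n" if t: "t \<in> {0..T}" for n t
  proof -
    have "f n t \<le> 2 * M * (1/2)^n * exp (l * t)"
      by (rule two_step_convolution_weighted_decay[OF \<open>0 \<le> M\<close> f0 f1 g_nonneg g_int rec \<open>0 \<le> l\<close> small t])
    also have "\<dots> \<le> 2 * M * (1/2)^n * exp (l * T)"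
      using t \<open>0 \<le> l\<close> \<open>0 \<le> M\<close> by (intro mult_left_mono) (auto intro: mult_left_mono)
    finally show ?thesis
      by (simp add: algebra_simps)
  qed
  then show thesis
    by (intro that[of "2 * exp (l * T)"]) auto
qed

lemma summable_geometric_powr:
  fixes c q r :: real
  assumes "0 \<le> c" "0 < q" "q < 1" "0 < r"
  shows "summable (\<lambda>n. (c * q ^ n) powr r)"
proof -
  have "(c * q ^ n) powr r = c powr r * (q powr r) ^ n" for n
    using assms by (simp add: powr_mult powr_realpow[symmetric] powr_powr mult.commute)
  moreover have "q powr r < 1"
    using assms powr_less_mono2[of r q 1] by simp
  ultimately show ?thesis
    by (simp add: summable_geometric summable_mult)
qed

lemma cSUP_nonneg_le:
  fixes f :: "'a \<Rightarrow> real"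
  assumes "x \<in> A" and "\<And>x. x \<in> A \<Longrightarrow> 0 \<le> f x" and "\<And>x. x \<in> A \<Longrightarrow> f x \<le> B"
  shows "0 \<le> (SUP x\<in>A. f x) \<and> (SUP x\<in>A. f x) \<le> B"
proof
  have "bdd_above (f ` A)"
    using assms(3) by (rule bdd_aboveI2)
  then have "f x \<le> (SUP x\<in>A. f x)"
    by (rule cSUP_upper[OF \<open>x \<in> A\<close>])
  then show "0 \<le> (SUP x\<in>A. f x)" using assms(2)[OF \<open>x \<in> A\<close>] by linarith
  show "(SUP x\<in>A. f x) \<le> B" by (rule cSUP_least) (use assms in auto)
qed

theorem lemma3p9:
  fixes f :: "nat \<Rightarrow> real \<Rightarrow> real" and g :: "real \<Rightarrow> real" and T :: real
  assumes T: "0 \<le> T"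
    and f_nonneg: "\<And>n t. t \<in> {0..T} \<Longrightarrow> 0 \<le> f n t"
    and bdd0: "bdd_above (f 0 ` {0..T})"
    and bdd1: "bdd_above (f 1 ` {0..T})"
    and g_nonneg: "\<And>t. t \<in> {0..T} \<Longrightarrow> 0 \<le> g t"
    and g_int: "g integrable_on {0..T}"
    and rec: "\<And>n t. n \<ge> 2 \<Longrightarrow> t \<in> {0..T} \<Longrightarrow>
              f n t \<le> integral {0..t} (\<lambda>s. (f (n - 1) s + f (n - 2) s) * g (t - s))"
  shows "\<exists>a :: nat \<Rightarrow> real.
           (\<forall>n. 0 < a n) \<and>
           (\<forall>p::real. p > 0 \<longrightarrow> summable (\<lambda>n. a n powr (1 / p))) \<and>
           (\<forall>n. (SUP t\<in>{0..T}. f n t) \<le>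
                 ((SUP t\<in>{0..T}. f 0 t) + (SUP t\<in>{0..T}. f 1 t)) * a n)
         \<and> (\<forall>p::real. p > 0 \<longrightarrow> summable (\<lambda>n. (SUP t\<in>{0..T}. f n t) powr (1 / p)))"
proof -
  define M where "M = (SUP t\<in>{0..T}. f 0 t) + (SUP t\<in>{0..T}. f 1 t)"
  have "0 \<in> {0..T}" using T by simp
  have sup0: "f 0 t \<le> (SUP t\<in>{0..T}. f 0 t)" and sup1: "f 1 t \<le> (SUP t\<in>{0..T}. f 1 t)"
    if "t \<in> {0..T}" for t
    using cSUP_upper[OF that bdd0] cSUP_upper[OF that bdd1] by auto
  have "0 \<le> (SUP t\<in>{0..T}. f 0 t)" and "0 \<le> (SUP t\<in>{0..T}. f 1 t)"
    using sup0 sup1 f_nonneg \<open>0 \<in> {0..T}\<close> by (meson order_trans)+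
  then have "0 \<le> M" and f0: "\<And>t. t \<in> {0..T} \<Longrightarrow> f 0 t \<le> M"
    and f1: "\<And>t. t \<in> {0..T} \<Longrightarrow> f 1 t \<le> M"
    unfolding M_def using sup0 sup1 by (auto intro: add_increasing add_increasing2)
  obtain c where "0 < c" and decay: "\<And>n t. t \<in> {0..T} \<Longrightarrow> f n t \<le> M * c * (1/2)^n"
    using two_step_convolution_geometric_decay[OF \<open>0 \<le> M\<close> f0 f1 g_nonneg g_int rec] by blast
  define a where "a n = c * (1/2)^n" for n
  have "f n t \<le> M * a n" if "t \<in> {0..T}" for n t
    using decay[OF that] by (simp add: a_def mult.assoc)
  then have sup_f: "0 \<le> (SUP t\<in>{0..T}. f n t) \<and> (SUP t\<in>{0..T}. f n t) \<le> M * a n" for n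
    using cSUP_nonneg_le[OF \<open>0 \<in> {0..T}\<close>] f_nonneg by blast
  have summable_a: "summable (\<lambda>n. (k * a n) powr r)" if "0 \<le> k" "0 < r" for k r
    using summable_geometric_powr[of "k * c" "1/2" r] that \<open>0 < c\<close>
    by (simp add: a_def mult.assoc)
  have "summable (\<lambda>n. (SUP t\<in>{0..T}. f n t) powr r)" if "0 < r" for r
  proof (rule summable_comparison_test'[OF summable_a[OF \<open>0 \<le> M\<close> that]])
    show "norm ((SUP t\<in>{0..T}. f n t) powr r) \<le> (M * a n) powr r" for n
      using sup_f[of n] \<open>0 < r\<close> by (simp add: powr_mono2)
  qed
  moreover have "summable (\<lambda>n. a n powr r)" if "0 < r" for r
    using summable_a[of 1 r] that by simp
  moreover have "\<forall>n. 0 < a n"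
    using \<open>0 < c\<close> by (simp add: a_def)
  ultimately show ?thesis
    using sup_f unfolding M_def by (intro exI[of _ a]) simp
qed

end
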